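(* Let $G$ be a finite simple graph. Then $\mathrm{mur}(G)=0$ if and only if $G$ or its complement $\overline{G}$ is a complete graph.
   Context: For a finite simple undirected graph $G$ on vertices $v_1,\dots,v_n$, let $A_G$ be its $(0,1)$-adjacency matrix, $D_G=\mathrm{diag}(d_1,\dots,d_n)$ with $d_i$ the degree of $v_i$, $I$ the $n\times n$ identity matrix and $J$ the $n\times n$ all-ones matrix. A universal adjacency matrix of $G$ is any matrix $\alpha A_G+\beta I+\gamma J+\delta D_G$ with real scalars $\alpha,\beta,\gamma,\delta$ and $\alpha\neq 0$. The minimum universal rank $\mathrm{mur}(G)$ is the minimum rank over all universal adjacency matrices of $G$. *)

theory Defs
  imports "HOL-Analysis.Analysis"
begin

definition simple_graph :: "('n::finite \<Rightarrow> 'n \<Rightarrow> bool) \<Rightarrow> bool" where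
  "simple_graph E \<longleftrightarrow> (\<forall>i j. E i j \<longrightarrow> E j i) \<and> (\<forall>i. \<not> E i i)"

definition complete_graph :: "('n::finite \<Rightarrow> 'n \<Rightarrow> bool) \<Rightarrow> bool" where
  "complete_graph E \<longleftrightarrow> (\<forall>i j. i \<noteq> j \<longrightarrow> E i j)"

definition graph_complement :: "('n::finite \<Rightarrow> 'n \<Rightarrow> bool) \<Rightarrow> ('n \<Rightarrow> 'n \<Rightarrow> bool)" where
  "graph_complement E = (\<lambda>i j. i \<noteq> j \<and> \<not> E i j)"

definition adj_matrix :: "('n::finite \<Rightarrow> 'n \<Rightarrow> bool) \<Rightarrow> real^'n^'n" where
  "adj_matrix E = (\<chi> i j. if E i j then 1 else 0)"

definition degree :: "('n::finite \<Rightarrow> 'n \<Rightarrow> bool) \<Rightarrow> 'n \<Rightarrow> nat" where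
  "degree E i = card {j. E i j}"

definition deg_matrix :: "('n::finite \<Rightarrow> 'n \<Rightarrow> bool) \<Rightarrow> real^'n^'n" where
  "deg_matrix E = (\<chi> i j. if i = j then real (degree E i) else 0)"

definition ones_matrix :: "real^'n::finite^'n" where
  "ones_matrix = (\<chi> i j. 1)"

definition universal_adj ::
  "('n::finite \<Rightarrow> 'n \<Rightarrow> bool) \<Rightarrow> real \<Rightarrow> real \<Rightarrow> real \<Rightarrow> real \<Rightarrow> real^'n^'n" where
  "universal_adj E \<alpha> \<beta> \<gamma> \<delta> =
     \<alpha> *\<^sub>R adj_matrix E + \<beta> *\<^sub>R mat 1 + \<gamma> *\<^sub>R ones_matrix + \<delta> *\<^sub>R deg_matrix E"

text \<open>Minimum universal rank: minimum rank over all universal adjacency matrices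
  (with \<alpha> \<noteq> 0). The set of ranks is a nonempty set of naturals bounded by CARD('n).\<close>
definition mur :: "('n::finite \<Rightarrow> 'n \<Rightarrow> bool) \<Rightarrow> nat" where
  "mur E = Min {rank (universal_adj E \<alpha> \<beta> \<gamma> \<delta>) | \<alpha> \<beta> \<gamma> \<delta>. \<alpha> \<noteq> 0}"

end

theory Submission
  imports Defs
begin

text \<open>A universal adjacency matrix with \<open>\<alpha> \<noteq> 0\<close> vanishes only if its off-diagonal entries
  \<open>\<alpha> [E i j] + \<gamma>\<close> are all zero, which forces \<open>E\<close> to be constant off the diagonal.
  Conversely \<open>A = J - I\<close> for the complete graph and \<open>A = 0\<close> for the empty graph.\<close>

lemma universal_adj_entry:
  "universal_adj E \<alpha> \<beta> \<gamma> \<delta> $ i $ j =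
   \<alpha> * (if E i j then 1 else 0) + \<beta> * (if i = j then 1 else 0) + \<gamma>
   + \<delta> * (if i = j then real (degree E i) else 0)"
  by (simp add: universal_adj_def adj_matrix_def ones_matrix_def deg_matrix_def mat_def)

lemma mur_eq_0_iff:
  fixes E :: "'n::finite \<Rightarrow> 'n \<Rightarrow> bool"
  shows "mur E = 0 \<longleftrightarrow> (\<exists>\<alpha> \<beta> \<gamma> \<delta>. \<alpha> \<noteq> 0 \<and> universal_adj E \<alpha> \<beta> \<gamma> \<delta> = 0)"
proof -
  define S where "S = {rank (universal_adj E \<alpha> \<beta> \<gamma> \<delta>) | \<alpha> \<beta> \<gamma> \<delta>. \<alpha> \<noteq> 0}"
  have "rank A \<le> CARD('n)" for A :: "real^'n^'n"
    using rank_bound[of A] by simp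
  then have "S \<subseteq> {..CARD('n)}"
    unfolding S_def by auto
  then have "finite S"
    using finite_subset by blast
  moreover have "S \<noteq> {}"
    unfolding S_def by (metis (mono_tags, lifting) empty_Collect_eq one_neq_zero)
  ultimately have "Min S = 0 \<longleftrightarrow> 0 \<in> S"
    by (metis Min_in Min_le le_zero_eq)
  then show ?thesis
    unfolding mur_def S_def[symmetric] by (auto simp: S_def rank_eq_0)
qed

lemma universal_adj_eq_0_imp_complete_or_empty:
  assumes "\<alpha> \<noteq> 0" and "universal_adj E \<alpha> \<beta> \<gamma> \<delta> = 0"
  shows "complete_graph E \<or> complete_graph (graph_complement E)"
proof (rule ccontr)
  have off_diag: "\<alpha> * (if E i j then 1 else 0) + \<gamma> = 0" if "i \<noteq> j" for i j
  proof -
    have "universal_adj E \<alpha> \<beta> \<gamma> \<delta> $ i $ j = 0"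
      using assms(2) by simp
    with that show ?thesis
      by (simp add: universal_adj_entry)
  qed
  assume "\<not> ?thesis"
  then obtain i j k l where "i \<noteq> j" "\<not> E i j" "k \<noteq> l" "E k l"
    unfolding complete_graph_def graph_complement_def by blast
  then have "\<gamma> = 0" and "\<alpha> + \<gamma> = 0"
    using off_diag[of i j] off_diag[of k l] by auto
  with assms(1) show False
    by simp
qed

lemma universal_adj_complete_graph:
  assumes "simple_graph E" and "complete_graph E"
  shows "universal_adj E 1 1 (-1) 0 = 0"
  using assms by (simp add: vec_eq_iff universal_adj_entry simple_graph_def complete_graph_def)

lemma universal_adj_empty_graph:
  assumes "simple_graph E" and "complete_graph (graph_complement E)"
  shows "universal_adj E 1 0 0 0 = 0"
  using assms
  by (simp add: vec_eq_iff universal_adj_entry simple_graph_def complete_graph_def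
      graph_complement_def) metis

theorem theorem2:
  fixes E :: "'n::finite \<Rightarrow> 'n \<Rightarrow> bool"
  assumes "simple_graph E"
  shows "mur E = 0 \<longleftrightarrow> complete_graph E \<or> complete_graph (graph_complement E)"
proof
  assume "mur E = 0"
  then show "complete_graph E \<or> complete_graph (graph_complement E)"
    using mur_eq_0_iff universal_adj_eq_0_imp_complete_or_empty by blast
next
  assume "complete_graph E \<or> complete_graph (graph_complement E)"
  then have "\<exists>\<beta> \<gamma>. universal_adj E 1 \<beta> \<gamma> 0 = 0"
    using assms universal_adj_complete_graph universal_adj_empty_graph by blast
  then show "mur E = 0"
    using mur_eq_0_iff one_neq_zero by blast
qed

end
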